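(* Let $c\in[\frac12,1)$ and let $d,\delta$ be positive integers with $d\ge\delta$. Let $G$ be a graph with maximum degree $\delta$ and $w:V(G)\to[0,1]$ a weight function with $w(V(G))=1$, and assume $G$ has no $d$-bounded $(w,c)$-balanced separator. Let $u,v\in V(G)$ with $u\in A_v$. Then either $u$ and $v$ are star twins, or $B_v\cup C_v\subseteq B_u\cup C_u$.
   Context: For $X\subseteq V(G)$, $w(X)=\sum_{x\in X}w(x)$; $N[v]=N(v)\cup\{v\}$; $N^d[v]$ is the set of vertices at distance at most $d$ from $v$. A set $X$ is $d$-bounded if $X\subseteq N^d[v]$ for some $v$. $X$ is a $(w,c)$-balanced separator if every connected component $D$ of $G\setminus X$ has $w(D)\le c$. For $v\in V(G)$, the canonical star separation $S_v=(A_v,C_v,B_v)$ is: $B_v$ the (under these assumptions unique) largest-weight connected component of $G\setminus N[v]$, $C_v$ the set consisting of $v$ and every vertex of $N(v)$ with a neighbor in $B_v$, and $A_v=V(G)\setminus(B_v\cup C_v)$. Two vertices $u,v$ are star twins if $B_u=B_v$, $C_u\setminus\{u\}=C_v\setminus\{v\}$ and $A_u\setminus\{v\}=A_v\setminus\{u\}$. *)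

theory Defs
  imports Complex_Main
begin

definition graph :: "'a set \<Rightarrow> ('a \<Rightarrow> 'a \<Rightarrow> bool) \<Rightarrow> bool" where
  "graph V E \<longleftrightarrow> finite V \<and> (\<forall>x y. E x y \<longrightarrow> x \<in> V \<and> y \<in> V)
     \<and> (\<forall>x y. E x y \<longrightarrow> E y x) \<and> (\<forall>x. \<not> E x x)"

definition nbhd :: "('a \<Rightarrow> 'a \<Rightarrow> bool) \<Rightarrow> 'a \<Rightarrow> 'a set" where
  "nbhd E v = {u. E v u}"

definition cnbhd :: "('a \<Rightarrow> 'a \<Rightarrow> bool) \<Rightarrow> 'a \<Rightarrow> 'a set" where
  "cnbhd E v = insert v (nbhd E v)"

definition max_degree :: "'a set \<Rightarrow> ('a \<Rightarrow> 'a \<Rightarrow> bool) \<Rightarrow> nat" where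
  "max_degree V E = Max ((\<lambda>v. card (nbhd E v)) ` V)"

definition dball :: "'a set \<Rightarrow> ('a \<Rightarrow> 'a \<Rightarrow> bool) \<Rightarrow> nat \<Rightarrow> 'a \<Rightarrow> 'a set" where
  "dball V E d v = {u \<in> V. \<exists>k\<le>d. (E ^^ k) v u}"

definition d_bounded :: "'a set \<Rightarrow> ('a \<Rightarrow> 'a \<Rightarrow> bool) \<Rightarrow> nat \<Rightarrow> 'a set \<Rightarrow> bool" where
  "d_bounded V E d X \<longleftrightarrow> (\<exists>v\<in>V. X \<subseteq> dball V E d v)"

definition restr :: "('a \<Rightarrow> 'a \<Rightarrow> bool) \<Rightarrow> 'a set \<Rightarrow> 'a \<Rightarrow> 'a \<Rightarrow> bool" where
  "restr E S x y \<longleftrightarrow> E x y \<and> x \<in> S \<and> y \<in> S"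

definition components :: "'a set \<Rightarrow> ('a \<Rightarrow> 'a \<Rightarrow> bool) \<Rightarrow> 'a set \<Rightarrow> 'a set set" where
  "components V E X = {D. \<exists>x \<in> V - X. D = {y. (restr E (V - X))\<^sup>*\<^sup>* x y}}"

definition balanced_sep :: "'a set \<Rightarrow> ('a \<Rightarrow> 'a \<Rightarrow> bool) \<Rightarrow> ('a \<Rightarrow> real) \<Rightarrow> real \<Rightarrow> 'a set \<Rightarrow> bool" where
  "balanced_sep V E w c X \<longleftrightarrow> (\<forall>D \<in> components V E X. sum w D \<le> c)"

definition starB :: "'a set \<Rightarrow> ('a \<Rightarrow> 'a \<Rightarrow> bool) \<Rightarrow> ('a \<Rightarrow> real) \<Rightarrow> 'a \<Rightarrow> 'a set" where
  "starB V E w v = (THE D. D \<in> components V E (cnbhd E v)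
       \<and> (\<forall>D' \<in> components V E (cnbhd E v). sum w D' \<le> sum w D))"

definition starC :: "'a set \<Rightarrow> ('a \<Rightarrow> 'a \<Rightarrow> bool) \<Rightarrow> ('a \<Rightarrow> real) \<Rightarrow> 'a \<Rightarrow> 'a set" where
  "starC V E w v = insert v {u \<in> nbhd E v. \<exists>b \<in> starB V E w v. E u b}"

definition starA :: "'a set \<Rightarrow> ('a \<Rightarrow> 'a \<Rightarrow> bool) \<Rightarrow> ('a \<Rightarrow> real) \<Rightarrow> 'a \<Rightarrow> 'a set" where
  "starA V E w v = V - (starB V E w v \<union> starC V E w v)"

definition star_twins :: "'a set \<Rightarrow> ('a \<Rightarrow> 'a \<Rightarrow> bool) \<Rightarrow> ('a \<Rightarrow> real) \<Rightarrow> 'a \<Rightarrow> 'a \<Rightarrow> bool" where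
  "star_twins V E w u v \<longleftrightarrow> starB V E w u = starB V E w v
     \<and> starC V E w u - {u} = starC V E w v - {v}
     \<and> starA V E w u - {v} = starA V E w v - {u}"

end

theory Submission
  imports Defs
begin

text \<open>If \<open>u \<in> A\<^sub>v\<close>, then \<open>N[u]\<close> misses the heavy component \<open>B\<^sub>v\<close> of \<open>G \ N[v]\<close>, so \<open>B\<^sub>v\<close> lies
  inside a component of \<open>G \ N[u]\<close> of weight more than \<open>1/2\<close>, which can only be \<open>B\<^sub>u\<close>; every
  neighbour of \<open>B\<^sub>u\<close> lies in \<open>B\<^sub>u \<union> C\<^sub>u\<close>, hence so does \<open>C\<^sub>v - {v}\<close>.  If moreover \<open>v \<in> A\<^sub>u\<close>,
  the same argument with the roles exchanged forces \<open>B\<^sub>u = B\<^sub>v\<close> and makes \<open>u, v\<close> star twins;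
  otherwise \<open>v \<in> B\<^sub>u \<union> C\<^sub>u\<close> and the inclusion \<open>B\<^sub>v \<union> C\<^sub>v \<subseteq> B\<^sub>u \<union> C\<^sub>u\<close> follows.\<close>

lemma symp_restr: "graph V E \<Longrightarrow> symp (restr E S)"
  unfolding graph_def restr_def symp_def by blast

lemma components_subset: "D \<in> components V E X \<Longrightarrow> D \<subseteq> V - X"
proof
  fix y assume "D \<in> components V E X" "y \<in> D"
  then obtain x where x: "x \<in> V - X" and xy: "(restr E (V - X))\<^sup>*\<^sup>* x y"
    unfolding components_def by blast
  from xy show "y \<in> V - X"
    by (induction rule: rtranclp_induct) (use x in \<open>auto simp: restr_def\<close>)
qed

lemma reachable_in_components:
  "x \<in> V - X \<Longrightarrow> {y. (restr E (V - X))\<^sup>*\<^sup>* x y} \<in> components V E X"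
  unfolding components_def by blast

lemma component_eq_reachable:
  assumes "graph V E" "D \<in> components V E X" "y \<in> D"
  shows "D = {z. (restr E (V - X))\<^sup>*\<^sup>* y z}"
proof -
  from assms(2) obtain x where D: "D = {z. (restr E (V - X))\<^sup>*\<^sup>* x z}"
    unfolding components_def by blast
  with assms(3) have xy: "(restr E (V - X))\<^sup>*\<^sup>* x y" by blast
  then have "(restr E (V - X))\<^sup>*\<^sup>* y x"
    using sympD[OF symp_rtranclp[OF symp_restr[OF assms(1)]]] by blast
  with xy show ?thesis unfolding D by (auto intro: rtranclp_trans)
qed

lemma components_disjoint:
  assumes "graph V E" "D1 \<in> components V E X" "D2 \<in> components V E X" "D1 \<noteq> D2"
  shows "D1 \<inter> D2 = {}"
  using component_eq_reachable[OF assms(1,2)] component_eq_reachable[OF assms(1,3)] assms(4)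
  by blast

lemma component_edge_closed:
  assumes "graph V E" "D \<in> components V E X" "y \<in> D" "E y z" "z \<notin> X"
  shows "z \<in> D"
proof -
  have "restr E (V - X) y z"
    using assms components_subset[OF assms(2)] unfolding graph_def restr_def by blast
  then show ?thesis using component_eq_reachable[OF assms(1-3)] by blast
qed

lemma component_subset_component:
  assumes "graph V E" "D \<in> components V E X" "b \<in> D" "D \<inter> Y = {}"
  shows "\<exists>D' \<in> components V E Y. D \<subseteq> D'"
proof -
  have D: "D = {z. (restr E (V - X))\<^sup>*\<^sup>* b z}"
    using component_eq_reachable[OF assms(1-3)] .
  have "(restr E (V - Y))\<^sup>*\<^sup>* b z" if "(restr E (V - X))\<^sup>*\<^sup>* b z" for z
    using that
  proof (induction rule: rtranclp_induct)
    case (step y z)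
    have "y \<in> D" "z \<in> D"
      unfolding D mem_Collect_eq by (fact step.hyps(1), rule rtranclp.rtrancl_into_rtrancl[OF step.hyps])
    then have "restr E (V - Y) y z"
      using step.hyps(2) assms(4) unfolding restr_def by blast
    with step.IH show ?case by (rule rtranclp.rtrancl_into_rtrancl)
  qed simp
  then have "D \<subseteq> {z. (restr E (V - Y))\<^sup>*\<^sup>* b z}" unfolding D by blast
  moreover have "b \<in> V - Y" using assms(3,4) components_subset[OF assms(2)] by blast
  ultimately show ?thesis using reachable_in_components[of b V Y E] by blast
qed

lemma sum_disjoint_le:
  fixes w :: "'a \<Rightarrow> real"
  assumes "finite V" "\<forall>x\<in>V. 0 \<le> w x" "D1 \<subseteq> V" "D2 \<subseteq> V" "D1 \<inter> D2 = {}"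
  shows "sum w D1 + sum w D2 \<le> sum w V"
proof -
  have "sum w D1 + sum w D2 = sum w (D1 \<union> D2)"
    using assms by (metis finite_subset sum.union_disjoint)
  also have "\<dots> \<le> sum w V"
    using assms by (intro sum_mono2) auto
  finally show ?thesis .
qed

lemma heavy_component_unique:
  fixes w :: "'a \<Rightarrow> real"
  assumes "graph V E" "\<forall>x\<in>V. 0 \<le> w x"
    "D1 \<in> components V E X" "D2 \<in> components V E X"
    "sum w V < 2 * sum w D1" "sum w V < 2 * sum w D2"
  shows "D1 = D2"
proof (rule ccontr)
  assume "D1 \<noteq> D2"
  then have "D1 \<inter> D2 = {}" using components_disjoint assms(1,3,4) by blast
  moreover have "D1 \<subseteq> V" "D2 \<subseteq> V" using components_subset assms(3,4) by blast+
  moreover have "finite V" using assms(1) unfolding graph_def by blast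
  ultimately have "sum w D1 + sum w D2 \<le> sum w V"
    using sum_disjoint_le assms(2) by blast
  with assms(5,6) show False by simp
qed

lemma starB_eq_heavy_component:
  fixes w :: "'a \<Rightarrow> real"
  assumes "graph V E" "\<forall>x\<in>V. 0 \<le> w x"
    "D \<in> components V E (cnbhd E v)" "sum w V < 2 * sum w D"
  shows "starB V E w v = D"
  unfolding starB_def
proof (rule the_equality)
  have "sum w D' \<le> sum w D" if "D' \<in> components V E (cnbhd E v)" for D'
  proof (cases "D' = D")
    case False
    then have "D' \<inter> D = {}" using components_disjoint assms(1,3) that by blast
    moreover have "D' \<subseteq> V" "D \<subseteq> V" using components_subset assms(3) that by blast+
    moreover have "finite V" using assms(1) unfolding graph_def by blast
    ultimately have "sum w D' + sum w D \<le> sum w V"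
      using sum_disjoint_le assms(2) by blast
    with assms(4) show ?thesis by simp
  qed simp
  with assms(3) show "D \<in> components V E (cnbhd E v) \<and>
      (\<forall>D' \<in> components V E (cnbhd E v). sum w D' \<le> sum w D)" by blast
next
  fix D' assume D': "D' \<in> components V E (cnbhd E v) \<and>
      (\<forall>D'' \<in> components V E (cnbhd E v). sum w D'' \<le> sum w D')"
  with assms(3,4) have "sum w V < 2 * sum w D'" by fastforce
  with D' show "D' = D" using heavy_component_unique[OF assms(1,2)] assms(3,4) by blast
qed

lemma cnbhd_d_bounded:
  assumes "graph V E" "v \<in> V" "0 < d"
  shows "d_bounded V E d (cnbhd E v)"
proof -
  have "u \<in> dball V E d v" if "u \<in> cnbhd E v" for u
  proof (cases "u = v")
    case True
    with assms(2) show ?thesis unfolding dball_def by force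
  next
    case False
    with that have "(E ^^ 1) v u" unfolding cnbhd_def nbhd_def by auto
    moreover have "u \<in> V" using that assms(1,2) unfolding cnbhd_def nbhd_def graph_def by blast
    ultimately show ?thesis using assms(3) unfolding dball_def
      by (metis One_nat_def Suc_leI mem_Collect_eq)
  qed
  with assms(2) show ?thesis unfolding d_bounded_def by blast
qed

lemma starB_starC_disjoint:
  "starB V E w v \<in> components V E (cnbhd E v) \<Longrightarrow> starB V E w v \<inter> starC V E w v = {}"
  using components_subset unfolding starC_def cnbhd_def by blast

locale no_bounded_balanced_separator =
  fixes V :: "'a set" and E :: "'a \<Rightarrow> 'a \<Rightarrow> bool" and w :: "'a \<Rightarrow> real"
    and c :: real and d :: nat
  assumes graph: "graph V E"
    and weight_nonneg: "\<forall>x\<in>V. 0 \<le> w x"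
    and weight_total: "sum w V = 1"
    and half_le_c: "1/2 \<le> c"
    and d_pos: "0 < d"
    and no_separator: "\<not> (\<exists>X. X \<subseteq> V \<and> d_bounded V E d X \<and> balanced_sep V E w c X)"
begin

abbreviation "A \<equiv> starA V E w"
abbreviation "B \<equiv> starB V E w"
abbreviation "C \<equiv> starC V E w"

lemma starB_heavy_component:
  assumes "v \<in> V"
  shows "B v \<in> components V E (cnbhd E v)" and "1/2 < sum w (B v)"
proof -
  have "cnbhd E v \<subseteq> V"
    using graph assms unfolding cnbhd_def nbhd_def graph_def by blast
  then have "\<not> balanced_sep V E w c (cnbhd E v)"
    using no_separator cnbhd_d_bounded[OF graph assms d_pos] by blast
  then obtain D where D: "D \<in> components V E (cnbhd E v)" "c < sum w D"
    unfolding balanced_sep_def by force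
  with half_le_c weight_total have "sum w V < 2 * sum w D" by simp
  then have "B v = D" using starB_eq_heavy_component[OF graph weight_nonneg D(1)] by blast
  with D half_le_c show "B v \<in> components V E (cnbhd E v)" "1/2 < sum w (B v)" by auto
qed

lemma adjacent_starB:
  assumes "u \<in> V" "b \<in> B u" "E x b"
  shows "x \<in> B u \<union> C u"
proof (cases "x \<in> cnbhd E u")
  case True
  with assms(2,3) show ?thesis unfolding cnbhd_def starC_def nbhd_def by auto
next
  case False
  moreover have "E b x" using graph assms(3) unfolding graph_def by blast
  ultimately show ?thesis
    using component_edge_closed[OF graph starB_heavy_component(1)[OF assms(1)] assms(2)] by blast
qed

lemma starB_disjoint_cnbhd_of_starA:
  assumes "v \<in> V" "u \<in> A v"
  shows "B v \<inter> cnbhd E u = {}"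
proof -
  have "u \<notin> B v \<union> C v" using assms(2) unfolding starA_def by blast
  then have "\<not> E u b" if "b \<in> B v" for b using adjacent_starB[OF assms(1) that] by blast
  with \<open>u \<notin> B v \<union> C v\<close> show ?thesis unfolding cnbhd_def nbhd_def by blast
qed

lemma starB_subset_of_starA:
  assumes "u \<in> V" "v \<in> V" "u \<in> A v"
  shows "B v \<subseteq> B u"
proof -
  note Bv = starB_heavy_component[OF assms(2)]
  obtain b where "b \<in> B v" using Bv(2) by fastforce
  then obtain D where D: "D \<in> components V E (cnbhd E u)" "B v \<subseteq> D"
    using component_subset_component[OF graph Bv(1)] starB_disjoint_cnbhd_of_starA[OF assms(2,3)]
    by blast
  have "sum w (B v) \<le> sum w D"
    using D(2) components_subset[OF D(1)] graph weight_nonneg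
    by (intro sum_mono2) (auto simp: graph_def intro: finite_subset)
  with Bv(2) have "sum w V < 2 * sum w D" using weight_total by simp
  then have "D = B u"
    using starB_eq_heavy_component[OF graph weight_nonneg D(1)] by simp
  with D(2) show ?thesis by simp
qed

lemma starC_subset_of_starA:
  assumes "u \<in> V" "v \<in> V" "u \<in> A v"
  shows "C v - {v} \<subseteq> B u \<union> C u"
proof
  fix x assume "x \<in> C v - {v}"
  then obtain b where "b \<in> B v" "E x b" unfolding starC_def nbhd_def by auto
  with starB_subset_of_starA[OF assms] show "x \<in> B u \<union> C u"
    using adjacent_starB[OF assms(1)] by blast
qed

lemma star_twins_if_mutually_in_starA:
  assumes "u \<in> V" "v \<in> V" "u \<in> A v" "v \<in> A u"
  shows "star_twins V E w u v"
proof -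
  have BB: "B u = B v"
    using starB_subset_of_starA[OF assms(1-3)] starB_subset_of_starA[OF assms(2,1,4)] by blast
  have "u \<notin> C v" "v \<notin> C u" using assms(3,4) unfolding starA_def by auto
  moreover have "B u \<inter> C u = {}" "B v \<inter> C v = {}"
    by (intro starB_starC_disjoint starB_heavy_component(1) assms(1,2))+
  ultimately have CC: "C u - {u} = C v - {v}"
    using starC_subset_of_starA[OF assms(1-3)] starC_subset_of_starA[OF assms(2,1,4)] BB by blast
  have "u \<in> C u" "v \<in> C v" unfolding starC_def by auto
  then have "A u - {v} = A v - {u}" unfolding starA_def using BB CC by blast
  with BB CC show ?thesis unfolding star_twins_def by blast
qed

end

theorem lemma4p2:
  fixes V :: "'a set" and E :: "'a \<Rightarrow> 'a \<Rightarrow> bool" and w :: "'a \<Rightarrow> real"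
    and c :: real and d \<delta> :: nat and u v :: 'a
  assumes "graph V E"
    and "1/2 \<le> c" and "c < 1"
    and "0 < d" and "0 < \<delta>" and "\<delta> \<le> d"
    and "max_degree V E = \<delta>"
    and "\<forall>x\<in>V. 0 \<le> w x \<and> w x \<le> 1"
    and "sum w V = 1"
    and "\<not> (\<exists>X. X \<subseteq> V \<and> d_bounded V E d X \<and> balanced_sep V E w c X)"
    and "u \<in> V" and "v \<in> V"
    and "u \<in> starA V E w v"
  shows "star_twins V E w u v \<or>
         starB V E w v \<union> starC V E w v \<subseteq> starB V E w u \<union> starC V E w u"
proof -
  interpret no_bounded_balanced_separator V E w c d
    using assms by unfold_locales auto
  show ?thesis
  proof (cases "v \<in> B u \<union> C u")
    case True
    then show ?thesis
      using starB_subset_of_starA[OF assms(11-13)] starC_subset_of_starA[OF assms(11-13)] by blast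
  next
    case False
    then have "v \<in> A u" using assms(12) unfolding starA_def by blast
    then show ?thesis using star_twins_if_mutually_in_starA[OF assms(11-13)] by blast
  qed
qed

end
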